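(* Let $\mathfrak L$ be a left-resolving $\lambda$-graph system presenting a subshift $\Lambda$, with vertex sets $V_l=\{v_1^l,\dots,v_{m(l)}^l\}$. Consider: (i) $\mathfrak L$ satisfies condition (I); (ii) for every $l\in\mathbb Z_{\ge0}$, $v\in V_l$, $(x_n)_{n\in\mathbb N}\in\Gamma^+_\infty(v)$ and $m\in\mathbb N$ there is $(y_n)_{n\in\mathbb N}\in\Gamma^+_\infty(v)$ with $x_j=y_j$ for $j=1,\dots,m$ and $x_N\neq y_N$ for some $N>m$; (iii) for all $k,l\in\mathbb N$ with $k\le l$ there exist $y(i)\in\Gamma^+_\infty(v_i^l)$, $i=1,\dots,m(l)$, such that $\sigma_\Lambda^n(y(i))\neq y(j)$ for all $i,j=1,\dots,m(l)$ and $n=1,\dots,k$. Then (i) $\Leftrightarrow$ (ii) $\Rightarrow$ (iii). If moreover $\mathfrak L$ is the minimal presentation $\mathfrak L_\Lambda^{\min}$ of a normal subshift $\Lambda$, then (i), (ii), (iii) are all equivalent.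
   Context: A $\lambda$-graph system over a finite alphabet $\Sigma$ is $\mathfrak L=(V,E,\lambda,\iota)$ where $V=\bigsqcup_{l\ge0}V_l$ with $V_l$ finite, $E=\bigsqcup_{l\ge0}E_{l,l+1}$ with each $e\in E_{l,l+1}$ having source $s(e)\in V_l$ and terminal $t(e)\in V_{l+1}$, $\lambda:E\to\Sigma$ a labeling, $\iota:V_{l+1}\to V_l$ surjections, every vertex has an outgoing edge and every vertex of $V_{l+1}$ an incoming edge, and (local property) for $u\in V_{l-1}$, $v\in V_{l+1}$ there is a label-preserving bijection between $\{e\in E_{l,l+1}:t(e)=v,\ \iota(s(e))=u\}$ and $\{e\in E_{l-1,l}:s(e)=u,\ t(e)=\iota(v)\}$. It is left-resolving if $t(e)=t(f)$, $\lambda(e)=\lambda(f)$ imply $e=f$. The presented subshift $\Lambda$ has as admissible words the labels of finite paths; $X_\Lambda$ is its right one-sided subshift with shift $\sigma_\Lambda$. For $v\in V_l$, $\Gamma^+_\infty(v)=\{(\lambda(e_1),\lambda(e_2),\dots):s(e_1)=v,\ e_i\in E_{l+i-1,l+i},\ t(e_i)=s(e_{i+1})\}\subset X_\Lambda$. $\mathfrak L$ satisfies condition (I) if $\Gamma^+_\infty(v)$ contains at least two distinct sequences for every vertex $v$. For subshifts: $\Gamma_l^-(\mu)=\{\nu\in B_l(\Lambda):\nu\mu\in B_*(\Lambda)\}$, $\Gamma_*^+(\mu)=\{\nu:\mu\nu\in B_*(\Lambda)\}$; $\mu$ is $l$-synchronizing if $\Gamma_l^-(\mu)=\Gamma_l^-(\mu\omega)$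 for all $\omega\in\Gamma_*^+(\mu)$, $S_l(\Lambda)$ the set of these; $\mu\sim_l\nu$ iff $\Gamma_l^-(\mu)=\Gamma_l^-(\nu)$. $\Lambda$ is normal if irreducible, infinite, and for every $\eta\in B_l(\Lambda)$ and $k>l$ there is $\nu\in S_k(\Lambda)$ with $\eta\nu\in S_{k-l}(\Lambda)$. The minimal presentation $\mathfrak L_\Lambda^{\min}$ has $V_0$ a singleton, $V_l=S_l(\Lambda)/\!\sim_l$, an edge labeled $\alpha$ from $[\alpha\nu]_l$ to $[\nu]_{l+1}$ for $\nu\in S_{l+1}(\Lambda)$ with $\alpha\nu\in B_*(\Lambda)$, and $\iota([\nu]_{l+1})=[\nu]_l$. *)

theory Defs
  imports Main
begin

record ('v, 'e, 'a) lgraph =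
  lV :: "nat \<Rightarrow> 'v set"
  lE :: "nat \<Rightarrow> 'e set"
  src :: "'e \<Rightarrow> 'v"
  trg :: "'e \<Rightarrow> 'v"
  lab :: "'e \<Rightarrow> 'a"
  liota :: "nat \<Rightarrow> 'v \<Rightarrow> 'v"

definition is_lgs :: "'a set \<Rightarrow> ('v, 'e, 'a) lgraph \<Rightarrow> bool" where
  "is_lgs \<Sigma> L \<longleftrightarrow>
     finite \<Sigma> \<and>
     (\<forall>l. finite (lV L l)) \<and>
     (\<forall>l l'. l \<noteq> l' \<longrightarrow> lV L l \<inter> lV L l' = {}) \<and>
     (\<forall>l l'. l \<noteq> l' \<longrightarrow> lE L l \<inter> lE L l' = {}) \<and>
     (\<forall>l. \<forall>e\<in>lE L l. src L e \<in> lV L l \<and> trg L e \<in> lV L (Suc l) \<and> lab L e \<in> \<Sigma>) \<and>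
     (\<forall>l. liota L l ` lV L (Suc l) = lV L l) \<and>
     (\<forall>l. \<forall>v\<in>lV L l. \<exists>e\<in>lE L l. src L e = v) \<and>
     (\<forall>l. \<forall>v\<in>lV L (Suc l). \<exists>e\<in>lE L l. trg L e = v) \<and>
     (\<forall>l. \<forall>u\<in>lV L l. \<forall>v\<in>lV L (Suc (Suc l)).
        \<exists>f. bij_betw f {e\<in>lE L (Suc l). trg L e = v \<and> liota L l (src L e) = u}
                        {e\<in>lE L l. src L e = u \<and> trg L e = liota L (Suc l) v}
            \<and> (\<forall>e\<in>{e\<in>lE L (Suc l). trg L e = v \<and> liota L l (src L e) = u}. lab L (f e) = lab L e))"

definition left_resolving :: "('v, 'e, 'a) lgraph \<Rightarrow> bool" where
  "left_resolving L \<longleftrightarrow>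
     (\<forall>l. \<forall>e\<in>lE L l. \<forall>f\<in>lE L l. trg L e = trg L f \<and> lab L e = lab L f \<longrightarrow> e = f)"

text \<open>Infinite paths starting at vertex v of level l; sequences are indexed from 0
 (index 0 corresponds to the first coordinate x_1 of the paper).\<close>

definition Gamma_inf :: "('v, 'e, 'a) lgraph \<Rightarrow> nat \<Rightarrow> 'v \<Rightarrow> (nat \<Rightarrow> 'a) set" where
  "Gamma_inf L l v = {(\<lambda>n. lab L (es n)) | es.
      (\<forall>i. es i \<in> lE L (l + i)) \<and> src L (es 0) = v \<and> (\<forall>i. trg L (es i) = src L (es (Suc i)))}"

definition shift :: "(nat \<Rightarrow> 'a) \<Rightarrow> (nat \<Rightarrow> 'a)" where
  "shift x = (\<lambda>i. x (Suc i))"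

definition condI :: "('v, 'e, 'a) lgraph \<Rightarrow> bool" where
  "condI L \<longleftrightarrow> (\<forall>l. \<forall>v\<in>lV L l. \<exists>x\<in>Gamma_inf L l v. \<exists>y\<in>Gamma_inf L l v. x \<noteq> y)"

definition condII :: "('v, 'e, 'a) lgraph \<Rightarrow> bool" where
  "condII L \<longleftrightarrow> (\<forall>l. \<forall>v\<in>lV L l. \<forall>x\<in>Gamma_inf L l v. \<forall>m::nat. m \<ge> 1 \<longrightarrow>
      (\<exists>y\<in>Gamma_inf L l v. (\<forall>j\<in>{1..m}. x (j - 1) = y (j - 1)) \<and>
                             (\<exists>N>m. x (N - 1) \<noteq> y (N - 1))))"

definition condIII :: "('v, 'e, 'a) lgraph \<Rightarrow> bool" where
  "condIII L \<longleftrightarrow> (\<forall>k l::nat. 1 \<le> k \<and> k \<le> l \<longrightarrow>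
      (\<exists>y. (\<forall>v\<in>lV L l. y v \<in> Gamma_inf L l v) \<and>
           (\<forall>v\<in>lV L l. \<forall>w\<in>lV L l. \<forall>n\<in>{1..k}. (shift ^^ n) (y v) \<noteq> y w)))"

text \<open>A (two-sided) subshift over the finite alphabet Sigma is represented by its
 language B = B_*(Lambda): a nonempty factorial, bi-extendable set of words.\<close>

definition is_subshift_lang :: "'a set \<Rightarrow> 'a list set \<Rightarrow> bool" where
  "is_subshift_lang \<Sigma> B \<longleftrightarrow> finite \<Sigma> \<and> B \<subseteq> lists \<Sigma> \<and> B \<noteq> {} \<and>
     (\<forall>u v w. u @ v @ w \<in> B \<longrightarrow> v \<in> B) \<and>
     (\<forall>w\<in>B. \<exists>a b. a # w @ [b] \<in> B)"

definition subshift_points :: "'a list set \<Rightarrow> (int \<Rightarrow> 'a) set" where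
  "subshift_points B = {x. \<forall>i::int. \<forall>n::nat. map (\<lambda>k. x (i + int k)) [0..<n] \<in> B}"

definition irreducible_lang :: "'a list set \<Rightarrow> bool" where
  "irreducible_lang B \<longleftrightarrow> (\<forall>u\<in>B. \<forall>w\<in>B. \<exists>v. u @ v @ w \<in> B)"

definition Gamma_minus :: "'a list set \<Rightarrow> nat \<Rightarrow> 'a list \<Rightarrow> 'a list set" where
  "Gamma_minus B l \<mu> = {\<nu>\<in>B. length \<nu> = l \<and> \<nu> @ \<mu> \<in> B}"

definition Gamma_plus :: "'a list set \<Rightarrow> 'a list \<Rightarrow> 'a list set" where
  "Gamma_plus B \<mu> = {\<nu>. \<mu> @ \<nu> \<in> B}"

definition Sync :: "'a list set \<Rightarrow> nat \<Rightarrow> 'a list set" where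
  "Sync B l = {\<mu>\<in>B. \<forall>\<omega>\<in>Gamma_plus B \<mu>. Gamma_minus B l \<mu> = Gamma_minus B l (\<mu> @ \<omega>)}"

definition normal_subshift :: "'a set \<Rightarrow> 'a list set \<Rightarrow> bool" where
  "normal_subshift \<Sigma> B \<longleftrightarrow> is_subshift_lang \<Sigma> B \<and> irreducible_lang B \<and>
     infinite (subshift_points B) \<and>
     (\<forall>\<eta>\<in>B. \<forall>k. k > length \<eta> \<longrightarrow>
        (\<exists>\<nu>\<in>Sync B k. \<eta> @ \<nu> \<in> Sync B (k - length \<eta>)))"

definition lclass :: "'a list set \<Rightarrow> nat \<Rightarrow> 'a list \<Rightarrow> 'a list set" where
  "lclass B l \<nu> = {\<mu>\<in>Sync B l. Gamma_minus B l \<mu> = Gamma_minus B l \<nu>}"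

definition min_pres :: "'a list set \<Rightarrow>
    (nat \<times> 'a list set, (nat \<times> 'a list set) \<times> 'a \<times> (nat \<times> 'a list set), 'a) lgraph" where
  "min_pres B = \<lparr>
     lV = (\<lambda>l. {(l, lclass B l \<nu>) | \<nu>. \<nu> \<in> Sync B l}),
     lE = (\<lambda>l. {((l, lclass B l (\<alpha> # \<nu>)), \<alpha>, (Suc l, lclass B (Suc l) \<nu>)) | \<alpha> \<nu>.
                 \<nu> \<in> Sync B (Suc l) \<and> \<alpha> # \<nu> \<in> B}),
     src = (\<lambda>e. fst e),
     trg = (\<lambda>e. snd (snd e)),
     lab = (\<lambda>e. fst (snd e)),
     liota = (\<lambda>l v. (l, lclass B l (SOME \<nu>. \<nu> \<in> snd v))) \<rparr>"

end

theory Submission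
  imports Defs
begin

text \<open>
  Write \<Gamma>(v) for the set of label sequences of infinite paths starting at v.
  (I) \<Rightarrow> (II): follow the path of x for m steps and leave it at the vertex reached, which
  carries a second sequence. (II) \<Rightarrow> (I) holds because every \<Gamma>(v) is nonempty.
  (II) \<Rightarrow> (III): under (II) every \<Gamma>(v) is infinite, whereas over a finite alphabet only
  finitely many sequences are mapped onto a given one by \<sigma>^n, and only finitely many are
  fixed by \<sigma>^n; so the y(i) can be chosen one vertex at a time.
  (III) \<Rightarrow> (I) for the minimal presentation of a normal subshift: every vertex v of level l is
  \<iota>(u) for a vertex u of level l + 1, and \<Gamma>(u) \<subseteq> \<Gamma>(v). If \<Gamma>(v) = {x}, then
  \<Gamma>(u) = {x}, while the terminal vertex u' of the first edge of the path of x has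
  \<Gamma>(u') = {\<sigma>(x)}; this contradicts (III) for k = 1 at level l + 1.
\<close>

definition lpath :: "('v, 'e, 'a) lgraph \<Rightarrow> nat \<Rightarrow> 'v \<Rightarrow> (nat \<Rightarrow> 'e) \<Rightarrow> bool" where
  "lpath L l v es \<longleftrightarrow>
     (\<forall>i. es i \<in> lE L (l + i)) \<and> src L (es 0) = v \<and> (\<forall>i. trg L (es i) = src L (es (Suc i)))"

lemma mem_Gamma_inf_iff: "x \<in> Gamma_inf L l v \<longleftrightarrow> (\<exists>es. lpath L l v es \<and> x = (\<lambda>n. lab L (es n)))"
  unfolding Gamma_inf_def lpath_def by blast

lemma lpath_drop:
  assumes "lpath L l v es"
  shows "lpath L (l + m) (src L (es m)) (\<lambda>i. es (i + m))"
  using assms unfolding lpath_def by (simp add: add.assoc add.commute[of m])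

lemma lpath_splice:
  assumes es: "lpath L l v es" and fs: "lpath L (l + m) (src L (es m)) fs"
  shows "lpath L l v (\<lambda>i. if i < m then es i else fs (i - m))"
  unfolding lpath_def
proof (intro conjI allI)
  fix i
  show "(if i < m then es i else fs (i - m)) \<in> lE L (l + i)"
    using es fs by (cases "i < m") (auto simp: lpath_def dest: spec[of _ "i - m"])
  show "trg L (if i < m then es i else fs (i - m)) = src L (if Suc i < m then es (Suc i) else fs (Suc i - m))"
  proof -
    consider "Suc i < m" | "Suc i = m" | "m \<le> i" by linarith
    then show ?thesis
      using es fs by cases (auto simp: lpath_def Suc_diff_le)
  qed
next
  show "src L (if 0 < m then es 0 else fs (0 - m)) = v"
    using es fs by (auto simp: lpath_def)
qed

section \<open>Sequences separated by the shift\<close>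

lemma funpow_shift: "(shift ^^ n) x = (\<lambda>i. x (i + n))"
  by (induction n) (auto simp: shift_def)

lemma finite_shift_preimage:
  assumes "finite S"
  shows "finite {x. (\<forall>i. x i \<in> S) \<and> (shift ^^ n) x = y}"
proof -
  let ?glue = "\<lambda>xs. (\<lambda>i. if i < n then xs ! i else y (i - n))"
  have "{x. (\<forall>i. x i \<in> S) \<and> (shift ^^ n) x = y} \<subseteq> ?glue ` {xs. set xs \<subseteq> S \<and> length xs = n}"
  proof
    fix x assume "x \<in> {x. (\<forall>i. x i \<in> S) \<and> (shift ^^ n) x = y}"
    then have "\<forall>i. x i \<in> S" and "\<And>i. x (i + n) = y i" by (auto simp: funpow_shift fun_eq_iff)
    then have "x = ?glue (map x [0..<n])" and "map x [0..<n] \<in> {xs. set xs \<subseteq> S \<and> length xs = n}"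
      by (auto simp: fun_eq_iff dest: spec[of _ "_ - n"]) (metis le_add_diff_inverse2 not_less)
    then show "x \<in> ?glue ` {xs. set xs \<subseteq> S \<and> length xs = n}" by blast
  qed
  then show ?thesis by (rule finite_subset) (intro finite_imageI finite_lists_length_eq assms)
qed

lemma periodic_mod:
  fixes x :: "nat \<Rightarrow> 'a"
  assumes "\<And>i. x (i + n) = x i"
  shows "x i = x (i mod n)"
proof -
  have "x (j + q * n) = x j" for j q
  proof (induction q)
    case (Suc q)
    then show ?case using assms[of "j + q * n"] by (simp add: ac_simps)
  qed simp
  then show ?thesis by (metis mod_div_mult_eq)
qed

lemma finite_shift_periodic:
  assumes "finite S" and "0 < n"
  shows "finite {x. (\<forall>i. x i \<in> S) \<and> (shift ^^ n) x = x}"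
proof -
  let ?repeat = "\<lambda>xs. (\<lambda>i. xs ! (i mod n))"
  have "{x. (\<forall>i. x i \<in> S) \<and> (shift ^^ n) x = x} \<subseteq> ?repeat ` {xs. set xs \<subseteq> S \<and> length xs = n}"
  proof
    fix x assume "x \<in> {x. (\<forall>i. x i \<in> S) \<and> (shift ^^ n) x = x}"
    then have S: "\<forall>i. x i \<in> S" and per: "\<And>i. x (i + n) = x i" by (auto simp: funpow_shift fun_eq_iff)
    have "x = ?repeat (map x [0..<n])"
      using periodic_mod[where x = x, OF per] \<open>0 < n\<close> by (simp add: fun_eq_iff)
    moreover have "map x [0..<n] \<in> {xs. set xs \<subseteq> S \<and> length xs = n}" using S by auto
    ultimately show "x \<in> ?repeat ` {xs. set xs \<subseteq> S \<and> length xs = n}" by blast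
  qed
  then show ?thesis by (rule finite_subset) (intro finite_imageI finite_lists_length_eq \<open>finite S\<close>)
qed

lemma shift_separated_choice:
  assumes "finite V" and "finite S"
    and "\<And>v. v \<in> V \<Longrightarrow> G v \<subseteq> {x. \<forall>i. x i \<in> S}"
    and "\<And>v. v \<in> V \<Longrightarrow> infinite (G v)"
  shows "\<exists>y. (\<forall>v\<in>V. y v \<in> G v) \<and> (\<forall>v\<in>V. \<forall>w\<in>V. \<forall>n\<in>{1..k}. (shift ^^ n) (y v) \<noteq> y w)"
  using assms(1,3,4)
proof (induction V rule: finite_induct)
  case empty
  then show ?case by simp
next
  case (insert a F)
  then obtain y where y_in: "\<forall>v\<in>F. y v \<in> G v"
    and y_sep: "\<forall>v\<in>F. \<forall>w\<in>F. \<forall>n\<in>{1..k}. (shift ^^ n) (y v) \<noteq> y w"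
    by auto
  \<comment> \<open>The value at the new vertex must avoid finitely many sequences, and G a is infinite.\<close>
  define bad where "bad =
       (\<lambda>(w, n). (shift ^^ n) (y w)) ` (F \<times> {1..k})
     \<union> (\<Union>w\<in>F. \<Union>n\<in>{1..k}. {x. (\<forall>i. x i \<in> S) \<and> (shift ^^ n) x = y w})
     \<union> (\<Union>n\<in>{1..k}. {x. (\<forall>i. x i \<in> S) \<and> (shift ^^ n) x = x})"
  have "finite bad"
    unfolding bad_def
    using insert.hyps(1) finite_shift_preimage[OF assms(2)] finite_shift_periodic[OF assms(2)] by auto
  then have "infinite (G a - bad)" using insert.prems(2) by (simp add: Diff_infinite_finite)
  then obtain z where z: "z \<in> G a" "z \<notin> bad" by (metis finite.emptyI ex_in_conv Diff_iff)
  have zS: "\<forall>i. z i \<in> S" using insert.prems(1)[of a] z(1) by auto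
  have "(shift ^^ n) (y w) \<noteq> z" if "w \<in> F" "n \<in> {1..k}" for w n
    using z(2) that unfolding bad_def by auto
  moreover have "(shift ^^ n) z \<noteq> y w" if "w \<in> F" "n \<in> {1..k}" for w n
    using z(2) zS that unfolding bad_def by auto
  moreover have "(shift ^^ n) z \<noteq> z" if "n \<in> {1..k}" for n
    using z(2) zS that unfolding bad_def by auto
  ultimately show ?case
    using y_in y_sep z(1) insert.hyps(2) by (intro exI[of _ "y(a := z)"]) auto
qed

locale extendable_lgraph =
  fixes L :: "('v, 'e, 'a) lgraph"
  assumes src_in_lV: "e \<in> lE L l \<Longrightarrow> src L e \<in> lV L l"
    and trg_in_lV: "e \<in> lE L l \<Longrightarrow> trg L e \<in> lV L (Suc l)"
    and out_edge: "v \<in> lV L l \<Longrightarrow> \<exists>e\<in>lE L l. src L e = v"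
begin

lemma lpath_src_in_lV: "lpath L l v es \<Longrightarrow> src L (es m) \<in> lV L (l + m)"
  by (simp add: lpath_def src_in_lV)

lemma Gamma_inf_nonempty:
  assumes v: "v \<in> lV L l"
  shows "Gamma_inf L l v \<noteq> {}"
proof -
  define next_edge where "next_edge = (\<lambda>k w. SOME e. e \<in> lE L k \<and> src L e = w)"
  have next_edge: "next_edge k w \<in> lE L k \<and> src L (next_edge k w) = w" if "w \<in> lV L k" for k w
    unfolding next_edge_def by (rule someI_ex) (use out_edge[OF that] in blast)
  define es where "es = rec_nat (next_edge l v) (\<lambda>i e. next_edge (Suc (l + i)) (trg L e))"
  have es_in: "es i \<in> lE L (l + i)" for i
    by (induction i) (simp_all add: es_def next_edge v trg_in_lV)
  have "lpath L l v es"
    unfolding lpath_def using es_in by (simp add: es_def next_edge v trg_in_lV)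
  then have "(\<lambda>n. lab L (es n)) \<in> Gamma_inf L l v" by (auto simp: mem_Gamma_inf_iff)
  then show ?thesis by blast
qed

lemma condI_imp_condII:
  assumes "condI L"
  shows "condII L"
  unfolding condII_def
proof (intro allI ballI impI)
  fix l v x and m :: nat
  assume "v \<in> lV L l" and "x \<in> Gamma_inf L l v"
  then obtain es where es: "lpath L l v es" and x: "x = (\<lambda>n. lab L (es n))"
    by (auto simp: mem_Gamma_inf_iff)
  define w where "w = src L (es m)"
  have tail: "(\<lambda>n. x (n + m)) \<in> Gamma_inf L (l + m) w"
    using lpath_drop[OF es] by (auto simp: mem_Gamma_inf_iff w_def x)
  obtain z where "z \<in> Gamma_inf L (l + m) w" and z_ne: "z \<noteq> (\<lambda>n. x (n + m))"
    using assms lpath_src_in_lV[OF es, of m] unfolding condI_def w_def by metis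
  then obtain fs where fs: "lpath L (l + m) w fs" and z: "z = (\<lambda>n. lab L (fs n))"
    by (auto simp: mem_Gamma_inf_iff)
  define y where "y = (\<lambda>n. lab L (if n < m then es n else fs (n - m)))"
  have "y \<in> Gamma_inf L l v"
    using lpath_splice[OF es fs[unfolded w_def]] by (auto simp: mem_Gamma_inf_iff y_def)
  moreover have "\<forall>j\<in>{1..m}. x (j - 1) = y (j - 1)"
    by (auto simp: x y_def)
  moreover obtain n where "z n \<noteq> x (n + m)" using z_ne by auto
  then have "x (Suc (n + m) - 1) \<noteq> y (Suc (n + m) - 1)" and "m < Suc (n + m)"
    by (simp_all add: y_def z)
  ultimately show "\<exists>y\<in>Gamma_inf L l v. (\<forall>j\<in>{1..m}. x (j - 1) = y (j - 1)) \<and> (\<exists>N>m. x (N - 1) \<noteq> y (N - 1))"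
    by blast
qed

lemma condII_imp_condI:
  assumes "condII L"
  shows "condI L"
  unfolding condI_def
proof (intro allI ballI)
  fix l v assume v: "v \<in> lV L l"
  then obtain x where x: "x \<in> Gamma_inf L l v" using Gamma_inf_nonempty by blast
  then obtain y N where "y \<in> Gamma_inf L l v" "x (N - 1) \<noteq> y (N - 1)"
    using assms v unfolding condII_def by (metis order_refl)
  with x show "\<exists>x\<in>Gamma_inf L l v. \<exists>y\<in>Gamma_inf L l v. x \<noteq> y" by metis
qed

lemma condI_iff_condII: "condI L \<longleftrightarrow> condII L"
  using condI_imp_condII condII_imp_condI by blast

lemma condII_imp_infinite_Gamma_inf:
  assumes II: "condII L" and v: "v \<in> lV L l"
  shows "infinite (Gamma_inf L l v)"
proof
  assume fin: "finite (Gamma_inf L l v)"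
  obtain x where x: "x \<in> Gamma_inf L l v" using Gamma_inf_nonempty[OF v] by blast
  define D where "D = Gamma_inf L l v - {x}"
  have "\<forall>z\<in>D. \<exists>n. z n \<noteq> x n" unfolding D_def by (auto simp: fun_eq_iff)
  then obtain diff where diff: "\<forall>z\<in>D. z (diff z) \<noteq> x (diff z)" by metis
  \<comment> \<open>Beyond position M every other sequence of the finite set D has already left x.\<close>
  define M where "M = Max (insert 0 (diff ` D))"
  have diff_le: "z \<in> D \<Longrightarrow> diff z \<le> M" for z
    unfolding M_def using fin by (simp add: D_def)
  obtain y where y: "y \<in> Gamma_inf L l v" "\<forall>j\<in>{1..Suc M}. x (j - 1) = y (j - 1)"
    "\<exists>N>Suc M. x (N - 1) \<noteq> y (N - 1)"
    using II v x unfolding condII_def by (metis le_add1 plus_1_eq_Suc)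
  have "y \<in> D" using y(1,3) unfolding D_def by auto
  moreover from this have "Suc (diff y) \<in> {1..Suc M}" using diff_le by simp
  then have "x (diff y) = y (diff y)" using y(2) by fastforce
  ultimately show False using diff by metis
qed

lemma condIII_imp_condI:
  assumes lift: "\<And>l v. v \<in> lV L l \<Longrightarrow> \<exists>u\<in>lV L (Suc l). Gamma_inf L (Suc l) u \<subseteq> Gamma_inf L l v"
    and III: "condIII L"
  shows "condI L"
proof (rule ccontr)
  assume "\<not> condI L"
  then obtain l v where v: "v \<in> lV L l" and unique: "\<forall>x\<in>Gamma_inf L l v. \<forall>x'\<in>Gamma_inf L l v. x = x'"
    unfolding condI_def by blast
  obtain x where x_in: "x \<in> Gamma_inf L l v" using Gamma_inf_nonempty[OF v] by blast
  then have x_only: "x' = x" if "x' \<in> Gamma_inf L l v" for x'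
    using unique that by blast
  obtain es where es: "lpath L l v es" and x: "x = (\<lambda>n. lab L (es n))"
    using x_in by (auto simp: mem_Gamma_inf_iff)
  obtain u where u: "u \<in> lV L (Suc l)" and u_sub: "Gamma_inf L (Suc l) u \<subseteq> Gamma_inf L l v"
    using lift[OF v] by blast
  define u' where "u' = src L (es 1)"
  have u': "u' \<in> lV L (Suc l)" using lpath_src_in_lV[OF es, of 1] by (simp add: u'_def)
  \<comment> \<open>Every path out of u' extends the first edge of the path of x to a path out of v.\<close>
  have u'_only: "z = shift x" if z_in: "z \<in> Gamma_inf L (Suc l) u'" for z
  proof -
    obtain fs where fs: "lpath L (Suc l) u' fs" and z: "z = (\<lambda>n. lab L (fs n))"
      using z_in by (auto simp: mem_Gamma_inf_iff)
    have "(\<lambda>n. lab L (if n < 1 then es n else fs (n - 1))) \<in> Gamma_inf L l v"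
      using lpath_splice[OF es, of 1 fs] fs by (auto simp: mem_Gamma_inf_iff u'_def)
    then have "(\<lambda>n. lab L (if n < 1 then es n else fs (n - 1))) = x" by (rule x_only)
    then show ?thesis by (auto simp: fun_eq_iff shift_def z dest: spec[of _ "Suc _"])
  qed
  obtain y where y_in: "\<forall>w\<in>lV L (Suc l). y w \<in> Gamma_inf L (Suc l) w"
    and y_sep: "\<forall>w\<in>lV L (Suc l). \<forall>w'\<in>lV L (Suc l). \<forall>n\<in>{1..1}. (shift ^^ n) (y w) \<noteq> y w'"
    using III[unfolded condIII_def, rule_format, of 1 "Suc l"] by auto
  have "y u = x" using x_only u_sub y_in u by blast
  moreover have "y u' = shift x" using u'_only y_in u' by blast
  moreover have "shift (y u) \<noteq> y u'" using y_sep u u' by auto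
  ultimately show False by simp
qed

end

locale finite_extendable_lgraph = extendable_lgraph L
  for L :: "('v, 'e, 'a) lgraph" +
  fixes \<Sigma> :: "'a set"
  assumes finite_alphabet: "finite \<Sigma>"
    and finite_lV: "finite (lV L l)"
    and lab_in: "e \<in> lE L l \<Longrightarrow> lab L e \<in> \<Sigma>"
begin

lemma condII_imp_condIII:
  assumes "condII L"
  shows "condIII L"
  unfolding condIII_def
proof (intro allI impI)
  fix k l :: nat
  have "Gamma_inf L l v \<subseteq> {x. \<forall>i. x i \<in> \<Sigma>}" for v
    by (force simp: mem_Gamma_inf_iff lpath_def intro: lab_in)
  then show "\<exists>y. (\<forall>v\<in>lV L l. y v \<in> Gamma_inf L l v) \<and>
           (\<forall>v\<in>lV L l. \<forall>w\<in>lV L l. \<forall>n\<in>{1..k}. (shift ^^ n) (y v) \<noteq> y w)"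
    by (rule shift_separated_choice[OF finite_lV finite_alphabet])
      (use condII_imp_infinite_Gamma_inf[OF assms] in auto)
qed

end

lemma is_lgs_finite_extendable:
  assumes "is_lgs \<Sigma> L"
  shows "finite_extendable_lgraph L \<Sigma>"
proof -
  have "finite \<Sigma>" "\<forall>l. finite (lV L l)"
    "\<forall>l. \<forall>e\<in>lE L l. src L e \<in> lV L l \<and> trg L e \<in> lV L (Suc l) \<and> lab L e \<in> \<Sigma>"
    "\<forall>l. \<forall>v\<in>lV L l. \<exists>e\<in>lE L l. src L e = v"
    using assms unfolding is_lgs_def by simp_all
  then show ?thesis by unfold_locales auto
qed

section \<open>The minimal presentation\<close>

lemma Sync_imp_mem: "\<mu> \<in> Sync B k \<Longrightarrow> \<mu> \<in> B"
  by (simp add: Sync_def)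

lemma Gamma_minus_Sync_append:
  "\<mu> \<in> Sync B l \<Longrightarrow> \<mu> @ \<omega> \<in> B \<Longrightarrow> Gamma_minus B l (\<mu> @ \<omega>) = Gamma_minus B l \<mu>"
  unfolding Sync_def Gamma_plus_def by auto

lemma lclass_cong: "Gamma_minus B l \<mu> = Gamma_minus B l \<nu> \<Longrightarrow> lclass B l \<mu> = lclass B l \<nu>"
  by (simp add: lclass_def)

lemma mem_lV_min_pres: "v \<in> lV (min_pres B) l \<longleftrightarrow> (\<exists>\<nu>\<in>Sync B l. v = (l, lclass B l \<nu>))"
  by (auto simp: min_pres_def)

lemma mem_lE_min_pres:
  "e \<in> lE (min_pres B) l \<longleftrightarrow>
     (\<exists>\<alpha> \<nu>. e = ((l, lclass B l (\<alpha> # \<nu>)), \<alpha>, (Suc l, lclass B (Suc l) \<nu>)) \<and>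
             \<nu> \<in> Sync B (Suc l) \<and> \<alpha> # \<nu> \<in> B)"
  by (auto simp: min_pres_def)

lemma src_min_pres [simp]: "src (min_pres B) e = fst e"
  and trg_min_pres [simp]: "trg (min_pres B) e = snd (snd e)"
  and lab_min_pres [simp]: "lab (min_pres B) e = fst (snd e)"
  and liota_min_pres: "liota (min_pres B) l v = (l, lclass B l (SOME \<nu>. \<nu> \<in> snd v))"
  by (simp_all add: min_pres_def)

context
  fixes \<Sigma> :: "'a set" and B :: "'a list set"
  assumes subshift: "is_subshift_lang \<Sigma> B"
begin

lemma subshift_infix: "u @ v @ w \<in> B \<Longrightarrow> v \<in> B"
  using subshift unfolding is_subshift_lang_def by blast

lemma subshift_prefix: "u @ v \<in> B \<Longrightarrow> u \<in> B"
  using subshift_infix[of "[]" u v] by simp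

lemma subshift_suffix: "u @ v \<in> B \<Longrightarrow> v \<in> B"
  using subshift_infix[of u v "[]"] by simp

lemma subshift_extend_left:
  assumes "w \<in> B"
  shows "\<exists>a. a # w \<in> B"
proof -
  obtain a b where "(a # w) @ [b] \<in> B" using subshift assms unfolding is_subshift_lang_def by fastforce
  then show ?thesis using subshift_prefix by blast
qed

lemma subshift_Nil: "[] \<in> B"
proof -
  obtain w where "w \<in> B" using subshift unfolding is_subshift_lang_def by blast
  then show ?thesis using subshift_prefix[of "[]" w] by simp
qed

lemma Gamma_minus_Suc_subset_imp_subset:
  assumes "Gamma_minus B (Suc l) \<mu> \<subseteq> Gamma_minus B (Suc l) \<nu>"
  shows "Gamma_minus B l \<mu> \<subseteq> Gamma_minus B l \<nu>"
proof
  fix \<eta> assume "\<eta> \<in> Gamma_minus B l \<mu>"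
  then have \<eta>: "length \<eta> = l" "\<eta> @ \<mu> \<in> B" by (auto simp: Gamma_minus_def)
  obtain a where "a # \<eta> @ \<mu> \<in> B" using subshift_extend_left[OF \<eta>(2)] by blast
  then have "a # \<eta> \<in> Gamma_minus B (Suc l) \<mu>"
    using \<eta> subshift_prefix[of "a # \<eta>" \<mu>] by (simp add: Gamma_minus_def)
  then have "a # \<eta> \<in> Gamma_minus B (Suc l) \<nu>" using assms by blast
  then have "[a] @ \<eta> @ \<nu> \<in> B" by (simp add: Gamma_minus_def)
  then have "\<eta> @ \<nu> \<in> B" by (rule subshift_suffix)
  then show "\<eta> \<in> Gamma_minus B l \<nu>" using \<eta> subshift_prefix by (simp add: Gamma_minus_def)
qed

lemma Gamma_minus_Suc_eq_imp_eq:
  "Gamma_minus B (Suc l) \<mu> = Gamma_minus B (Suc l) \<nu> \<Longrightarrow> Gamma_minus B l \<mu> = Gamma_minus B l \<nu>"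
  using Gamma_minus_Suc_subset_imp_subset by (metis equalityI order_refl)

lemma Sync_Suc_imp_Sync: "\<mu> \<in> Sync B (Suc l) \<Longrightarrow> \<mu> \<in> Sync B l"
  unfolding Sync_def using Gamma_minus_Suc_eq_imp_eq by blast

lemma Sync_append_left:
  assumes \<rho>: "\<rho> \<in> Sync B k" and "\<gamma> @ \<rho> \<in> B" and len: "length \<gamma> \<le> k"
  shows "\<gamma> @ \<rho> \<in> Sync B (k - length \<gamma>)"
  unfolding Sync_def
proof (intro CollectI conjI ballI \<open>\<gamma> @ \<rho> \<in> B\<close>)
  fix \<omega> assume "\<omega> \<in> Gamma_plus B (\<gamma> @ \<rho>)"
  then have "\<rho> @ \<omega> \<in> B" using subshift_suffix[of \<gamma>] by (simp add: Gamma_plus_def)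
  then have eq: "Gamma_minus B k \<rho> = Gamma_minus B k (\<rho> @ \<omega>)"
    using \<rho> unfolding Sync_def Gamma_plus_def by blast
  \<comment> \<open>A left context of \<gamma> \<rho> of length k - |\<gamma>|, followed by \<gamma>, is a left context of \<rho> of length k.\<close>
  have "\<eta> @ \<gamma> @ \<rho> \<in> B \<longleftrightarrow> \<eta> @ \<gamma> @ \<rho> @ \<omega> \<in> B" if "length \<eta> = k - length \<gamma>" for \<eta>
  proof -
    have k: "length (\<eta> @ \<gamma>) = k" using that len by simp
    have "\<eta> @ \<gamma> @ \<rho> \<in> B \<longleftrightarrow> \<eta> @ \<gamma> \<in> Gamma_minus B k \<rho>"
      using k subshift_prefix[of "\<eta> @ \<gamma>" \<rho>] by (auto simp: Gamma_minus_def)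
    also have "\<dots> \<longleftrightarrow> \<eta> @ \<gamma> \<in> Gamma_minus B k (\<rho> @ \<omega>)" by (simp add: eq)
    also have "\<dots> \<longleftrightarrow> \<eta> @ \<gamma> @ \<rho> @ \<omega> \<in> B"
      using k subshift_prefix[of "\<eta> @ \<gamma>" "\<rho> @ \<omega>"] by (auto simp: Gamma_minus_def)
    finally show ?thesis .
  qed
  then show "Gamma_minus B (k - length \<gamma>) (\<gamma> @ \<rho>) = Gamma_minus B (k - length \<gamma>) ((\<gamma> @ \<rho>) @ \<omega>)"
    by (auto simp: Gamma_minus_def)
qed

lemma Sync_Cons: "\<nu> \<in> Sync B (Suc l) \<Longrightarrow> \<alpha> # \<nu> \<in> B \<Longrightarrow> \<alpha> # \<nu> \<in> Sync B l"
  using Sync_append_left[of \<nu> "Suc l" "[\<alpha>]"] by simp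

lemma liota_min_pres_lclass:
  assumes \<nu>: "\<nu> \<in> Sync B (Suc l)"
  shows "liota (min_pres B) l (Suc l, lclass B (Suc l) \<nu>) = (l, lclass B l \<nu>)"
proof -
  have "\<nu> \<in> lclass B (Suc l) \<nu>" using \<nu> by (simp add: lclass_def)
  then have "(SOME \<mu>. \<mu> \<in> lclass B (Suc l) \<nu>) \<in> lclass B (Suc l) \<nu>" by (rule someI)
  then have "Gamma_minus B (Suc l) (SOME \<mu>. \<mu> \<in> lclass B (Suc l) \<nu>) = Gamma_minus B (Suc l) \<nu>"
    by (simp add: lclass_def)
  then have "lclass B l (SOME \<mu>. \<mu> \<in> lclass B (Suc l) \<nu>) = lclass B l \<nu>"
    by (rule lclass_cong[OF Gamma_minus_Suc_eq_imp_eq])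
  then show ?thesis by (simp add: liota_min_pres)
qed

lemma liota_min_pres_edge:
  assumes "e \<in> lE (min_pres B) (Suc k)"
  shows "(liota (min_pres B) k (fst e), fst (snd e), liota (min_pres B) (Suc k) (snd (snd e)))
           \<in> lE (min_pres B) k"
proof -
  obtain \<alpha> \<nu> where e: "e = ((Suc k, lclass B (Suc k) (\<alpha> # \<nu>)), \<alpha>, (Suc (Suc k), lclass B (Suc (Suc k)) \<nu>))"
    and \<nu>: "\<nu> \<in> Sync B (Suc (Suc k))" and \<alpha>\<nu>: "\<alpha> # \<nu> \<in> B"
    using assms unfolding mem_lE_min_pres by blast
  have "\<alpha> # \<nu> \<in> Sync B (Suc k)" using Sync_Cons[OF \<nu> \<alpha>\<nu>] .
  then show ?thesis
    using \<nu> \<alpha>\<nu> Sync_Suc_imp_Sync[OF \<nu>]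
    by (auto simp: e liota_min_pres_lclass intro!: mem_lE_min_pres[THEN iffD2])
qed

lemma Gamma_inf_min_pres_subset_liota:
  "Gamma_inf (min_pres B) (Suc l) u \<subseteq> Gamma_inf (min_pres B) l (liota (min_pres B) l u)"
proof
  let ?M = "min_pres B"
  fix x assume "x \<in> Gamma_inf ?M (Suc l) u"
  then obtain es where es: "lpath ?M (Suc l) u es" and x: "x = (\<lambda>n. lab ?M (es n))"
    by (auto simp: mem_Gamma_inf_iff)
  define es' where "es' = (\<lambda>i. (liota ?M (l + i) (fst (es i)), fst (snd (es i)),
                                 liota ?M (Suc (l + i)) (snd (snd (es i)))))"
  have "es' i \<in> lE ?M (l + i)" for i
    using liota_min_pres_edge[of "es i" "l + i"] es by (simp add: lpath_def es'_def)
  then have "lpath ?M l (liota ?M l u) es'"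
    using es unfolding lpath_def es'_def by simp
  moreover have "x = (\<lambda>n. lab ?M (es' n))" by (simp add: x es'_def)
  ultimately show "x \<in> Gamma_inf ?M l (liota ?M l u)" by (auto simp: mem_Gamma_inf_iff)
qed

lemma lab_min_pres_in: "e \<in> lE (min_pres B) l \<Longrightarrow> lab (min_pres B) e \<in> \<Sigma>"
  using subshift unfolding mem_lE_min_pres is_subshift_lang_def by auto

lemma finite_lV_min_pres: "finite (lV (min_pres B) l)"
proof -
  have "finite \<Sigma>" and "B \<subseteq> lists \<Sigma>" using subshift by (auto simp: is_subshift_lang_def)
  \<comment> \<open>A class at level l is determined by its set of left contexts, a set of words of length l.\<close>
  let ?vertex = "\<lambda>G. (l, {\<mu>\<in>Sync B l. Gamma_minus B l \<mu> = G})"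
  have "lV (min_pres B) l \<subseteq> ?vertex ` Pow {xs. set xs \<subseteq> \<Sigma> \<and> length xs = l}"
  proof
    fix v assume "v \<in> lV (min_pres B) l"
    then obtain \<nu> where v: "v = (l, lclass B l \<nu>)" unfolding mem_lV_min_pres by blast
    have "Gamma_minus B l \<nu> \<subseteq> {xs. set xs \<subseteq> \<Sigma> \<and> length xs = l}"
      using \<open>B \<subseteq> lists \<Sigma>\<close> by (auto simp: Gamma_minus_def)
    moreover have "v = ?vertex (Gamma_minus B l \<nu>)" by (simp add: v lclass_def)
    ultimately show "v \<in> ?vertex ` Pow {xs. set xs \<subseteq> \<Sigma> \<and> length xs = l}" by blast
  qed
  then show ?thesis
    by (rule finite_subset) (intro finite_imageI finite_Pow_iff[THEN iffD2] finite_lists_length_eq \<open>finite \<Sigma>\<close>)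
qed

end

context
  fixes \<Sigma> :: "'a set" and B :: "'a list set"
  assumes normal: "normal_subshift \<Sigma> B"
begin

lemma normal_subshift_lang: "is_subshift_lang \<Sigma> B"
  using normal by (simp add: normal_subshift_def)

lemma normal_Sync_extension:
  "\<eta> \<in> B \<Longrightarrow> length \<eta> < k \<Longrightarrow> \<exists>\<nu>\<in>Sync B k. \<eta> @ \<nu> \<in> Sync B (k - length \<eta>)"
  using normal by (simp add: normal_subshift_def)

lemma liota_min_pres_surj:
  assumes "v \<in> lV (min_pres B) l"
  shows "\<exists>u\<in>lV (min_pres B) (Suc l). liota (min_pres B) l u = v"
proof -
  obtain \<nu> where \<nu>: "\<nu> \<in> Sync B l" and v: "v = (l, lclass B l \<nu>)"
    using assms unfolding mem_lV_min_pres by blast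
  obtain \<rho> where \<nu>\<rho>: "\<nu> @ \<rho> \<in> Sync B (Suc l)"
    using normal_Sync_extension[OF Sync_imp_mem[OF \<nu>], of "length \<nu> + Suc l"] by auto
  have "lclass B l (\<nu> @ \<rho>) = lclass B l \<nu>"
    by (rule lclass_cong[OF Gamma_minus_Sync_append[OF \<nu> Sync_imp_mem[OF \<nu>\<rho>]]])
  then have "liota (min_pres B) l (Suc l, lclass B (Suc l) (\<nu> @ \<rho>)) = v"
    using liota_min_pres_lclass[OF normal_subshift_lang \<nu>\<rho>] v by simp
  moreover have "(Suc l, lclass B (Suc l) (\<nu> @ \<rho>)) \<in> lV (min_pres B) (Suc l)"
    using \<nu>\<rho> unfolding mem_lV_min_pres by blast
  ultimately show ?thesis by blast
qed

lemma min_pres_out_edge: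
  assumes "v \<in> lV (min_pres B) l"
  shows "\<exists>e\<in>lE (min_pres B) l. src (min_pres B) e = v"
proof -
  have subshift: "is_subshift_lang \<Sigma> B" by (rule normal_subshift_lang)
  obtain \<nu> where \<nu>: "\<nu> \<in> Sync B l" and v: "v = (l, lclass B l \<nu>)"
    using assms unfolding mem_lV_min_pres by blast
  obtain \<alpha> \<mu> \<omega> where \<alpha>\<mu>: "\<alpha> # \<mu> = \<nu> @ \<omega>" "\<alpha> # \<mu> \<in> B" and \<mu>: "\<mu> \<in> Sync B (Suc l)"
  proof (cases \<nu>)
    case Nil
    obtain \<rho> where \<rho>: "\<rho> \<in> Sync B (Suc l)"
      using normal_Sync_extension[OF subshift_Nil[OF subshift], of "Suc l"] by auto
    obtain a where "a # \<rho> \<in> B" using subshift_extend_left[OF subshift Sync_imp_mem[OF \<rho>]] by blast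
    with \<rho> show thesis using that[of a \<rho> "a # \<rho>"] Nil by simp
  next
    case (Cons \<alpha> \<nu>')
    obtain \<rho> where \<rho>: "\<rho> \<in> Sync B (length \<nu> + Suc l)" and \<nu>\<rho>: "\<nu> @ \<rho> \<in> B"
      using normal_Sync_extension[OF Sync_imp_mem[OF \<nu>], of "length \<nu> + Suc l"]
      by (auto dest: Sync_imp_mem)
    have "\<nu>' @ \<rho> \<in> B" using \<nu>\<rho> Cons subshift_suffix[OF subshift, of "[\<alpha>]"] by simp
    then have "\<nu>' @ \<rho> \<in> Sync B (Suc (Suc l))"
      using Sync_append_left[OF subshift \<rho>, of \<nu>'] Cons by simp
    then show thesis using that[of \<alpha> "\<nu>' @ \<rho>" \<rho>] \<nu>\<rho> Cons Sync_Suc_imp_Sync[OF subshift] by simp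
  qed
  define e where "e = ((l, lclass B l (\<alpha> # \<mu>)), \<alpha>, (Suc l, lclass B (Suc l) \<mu>))"
  have "e \<in> lE (min_pres B) l" using \<alpha>\<mu>(2) \<mu> unfolding mem_lE_min_pres e_def by blast
  moreover have "lclass B l (\<alpha> # \<mu>) = lclass B l \<nu>"
    using \<alpha>\<mu> by (metis lclass_cong Gamma_minus_Sync_append[OF \<nu>])
  then have "src (min_pres B) e = v" by (simp add: e_def v)
  ultimately show ?thesis by blast
qed

lemma min_pres_finite_extendable: "finite_extendable_lgraph (min_pres B) \<Sigma>"
proof -
  have subshift: "is_subshift_lang \<Sigma> B" by (rule normal_subshift_lang)
  show ?thesis
  proof unfold_locales
    fix e l assume "e \<in> lE (min_pres B) l"
    then show "src (min_pres B) e \<in> lV (min_pres B) l" and "trg (min_pres B) e \<in> lV (min_pres B) (Suc l)"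
      by (auto simp: mem_lE_min_pres mem_lV_min_pres dest: Sync_Cons[OF subshift])
    show "lab (min_pres B) e \<in> \<Sigma>" using lab_min_pres_in[OF subshift] \<open>e \<in> lE (min_pres B) l\<close> .
  next
    show "finite \<Sigma>" using subshift by (simp add: is_subshift_lang_def)
  qed (use min_pres_out_edge finite_lV_min_pres[OF subshift] in auto)
qed

lemma min_pres_Gamma_inf_lift:
  assumes "v \<in> lV (min_pres B) l"
  shows "\<exists>u\<in>lV (min_pres B) (Suc l). Gamma_inf (min_pres B) (Suc l) u \<subseteq> Gamma_inf (min_pres B) l v"
  using liota_min_pres_surj[OF assms] Gamma_inf_min_pres_subset_liota[OF normal_subshift_lang]
  by blast

end

theorem lemma2p13:
  shows "(\<forall>(\<Sigma>::'a set) (L::('v, 'e, 'a) lgraph). is_lgs \<Sigma> L \<and> left_resolving L \<longrightarrow>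
            (condI L \<longleftrightarrow> condII L) \<and> (condII L \<longrightarrow> condIII L))
       \<and> (\<forall>(\<Sigma>::'a set) (B::'a list set). normal_subshift \<Sigma> B \<longrightarrow>
            (condI (min_pres B) \<longleftrightarrow> condII (min_pres B)) \<and>
            (condII (min_pres B) \<longleftrightarrow> condIII (min_pres B)))"
proof (intro conjI allI impI)
  fix \<Sigma> :: "'a set" and L :: "('v, 'e, 'a) lgraph"
  assume "is_lgs \<Sigma> L \<and> left_resolving L"
  then interpret finite_extendable_lgraph L \<Sigma> by (simp add: is_lgs_finite_extendable)
  show "condI L \<longleftrightarrow> condII L" by (rule condI_iff_condII)
  show "condII L \<Longrightarrow> condIII L" by (rule condII_imp_condIII)
next
  fix \<Sigma> :: "'a set" and B :: "'a list set"
  assume normal: "normal_subshift \<Sigma> B"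
  then interpret finite_extendable_lgraph "min_pres B" \<Sigma> by (rule min_pres_finite_extendable)
  show "condI (min_pres B) \<longleftrightarrow> condII (min_pres B)" by (rule condI_iff_condII)
  show "condII (min_pres B) \<longleftrightarrow> condIII (min_pres B)"
    using condII_imp_condIII condIII_imp_condI[OF min_pres_Gamma_inf_lift[OF normal]] condI_iff_condII
    by blast
qed

end
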